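(* Let $v_\pm>0$ and $u_->u_+$. For $\epsilon_1,\epsilon_2>0$ let $(u^{\epsilon_1\epsilon_2},v^{\epsilon_1\epsilon_2})(t,x)$ be the two-shock Riemann solution of the perturbed Brio system with data $(u_\pm,v_\pm)$. Then as $\epsilon_1,\epsilon_2\to0$, in the sense of distributions on $\{(t,x):t>0\}$, $$u^{\epsilon_1\epsilon_2}\to u_-+(u_+-u_-)H(x-\sigma t),\qquad v^{\epsilon_1\epsilon_2}\to v_-+(v_+-v_-)H(x-\sigma t)+w(t)\,\delta_S,$$ where $H$ is the Heaviside function, $\sigma=\tfrac12(u_-+u_+)$, $S=\{(t,\sigma t):t\ge0\}$ and $w(t)=\tfrac12(v_-+v_+)(u_--u_+)t$; i.e., for every $\phi\in C_0^\infty$ on $t>0$, $\iint v^{\epsilon_1\epsilon_2}\phi\,dx\,dt\to\iint(v_-+(v_+-v_-)H(x-\sigma t))\phi\,dx\,dt+\int_0^\infty w(t)\phi(t,\sigma t)\,dt$. This limit is the delta-shock solution of the transport equations $u_t+(\tfrac12u^2)_x=0$, $v_t+(uv)_x=0$ with the same Riemann data.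
   Context: Perturbed Brio system: $u_t+(\tfrac12u^2+\tfrac12\epsilon_1v^2)_x=0$, $v_t+(uv-\epsilon_2v)_x=0$, $\epsilon_1,\epsilon_2>0$, $v>0$, with Riemann data $(u_-,v_-)$ for $x<0$, $(u_+,v_+)$ for $x>0$. The two-shock Riemann solution is: $(u_-,v_-)$ for $x/t<\sigma_1$, $(u_*,v_* )$ for $\sigma_1<x/t<\sigma_2$, $(u_+,v_+)$ for $x/t>\sigma_2$, where $v_*>\max(v_-,v_+)$, $u_+<u_*<u_-$, $$u_*=u_-+(v_*-v_-)\frac{\epsilon_2-\sqrt{\epsilon_2^2+4\epsilon_1(v_*+v_-)^2}}{v_*+v_-},\qquad u_+=u_*+(v_+-v_* )\frac{\epsilon_2+\sqrt{\epsilon_2^2+4\epsilon_1(v_*+v_+)^2}}{v_*+v_+},$$ $\sigma_1=u_-+\frac{v_*(u_*-u_-)}{v_*-v_-}-\epsilon_2$, $\sigma_2=u_++\frac{v_*(u_+-u_* )}{v_+-v_*}-\epsilon_2$. The weighted delta function on $S$ is defined by $\langle w\delta_S,\phi\rangle=\int_0^\infty w(t)\phi(t,\sigma t)\,dt$. *)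

theory Defs
  imports "HOL-Analysis.Analysis"
begin

text \<open>Functions of (t,x) in R^2. C^k regularity via iterated partial derivatives.\<close>

fun Ck :: "nat \<Rightarrow> (real \<times> real \<Rightarrow> real) \<Rightarrow> bool" where
  "Ck 0 f = continuous_on UNIV f"
| "Ck (Suc k) f = ((\<forall>z. f differentiable (at z)) \<and>
      Ck k (\<lambda>z. frechet_derivative f (at z) (1, 0)) \<and>
      Ck k (\<lambda>z. frechet_derivative f (at z) (0, 1)))"

definition smooth_fun :: "(real \<times> real \<Rightarrow> real) \<Rightarrow> bool" where
  "smooth_fun f \<longleftrightarrow> (\<forall>k. Ck k f)"

definition test_fun_pos :: "(real \<times> real \<Rightarrow> real) \<Rightarrow> bool" where
  "test_fun_pos \<phi> \<longleftrightarrow> smooth_fun \<phi> \<and> compact (closure {z. \<phi> z \<noteq> 0})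
      \<and> closure {z. \<phi> z \<noteq> 0} \<subseteq> {z. 0 < fst z}"

text \<open>Intermediate state (u_*, v_*) of the two-shock Riemann solution.\<close>
definition two_shock_state ::
  "real \<Rightarrow> real \<Rightarrow> real \<Rightarrow> real \<Rightarrow> real \<Rightarrow> real \<Rightarrow> real \<Rightarrow> real \<Rightarrow> bool" where
  "two_shock_state e1 e2 um vm up vp us vs \<longleftrightarrow>
     vs > max vm vp \<and> up < us \<and> us < um \<and>
     us = um + (vs - vm) * ((e2 - sqrt (e2^2 + 4 * e1 * (vs + vm)^2)) / (vs + vm)) \<and>
     up = us + (vp - vs) * ((e2 + sqrt (e2^2 + 4 * e1 * (vs + vp)^2)) / (vs + vp))"

definition shock1_speed :: "real \<Rightarrow> real \<Rightarrow> real \<Rightarrow> real \<Rightarrow> real \<Rightarrow> real" where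
  "shock1_speed e2 um vm us vs = um + vs * (us - um) / (vs - vm) - e2"

definition shock2_speed :: "real \<Rightarrow> real \<Rightarrow> real \<Rightarrow> real \<Rightarrow> real \<Rightarrow> real" where
  "shock2_speed e2 up vp us vs = up + vs * (up - us) / (vp - vs) - e2"

definition three_state :: "real \<Rightarrow> real \<Rightarrow> real \<Rightarrow> real \<Rightarrow> real \<Rightarrow> real \<times> real \<Rightarrow> real" where
  "three_state a b c s1 s2 z = (let t = fst z; x = snd z in
      if x / t < s1 then a else if x / t < s2 then b else c)"

definition Heaviside :: "real \<Rightarrow> real" where
  "Heaviside y = (if y \<ge> 0 then 1 else 0)"

end

theory Submission
  imports Defs
begin

(* All three profiles are self-similar, so the substitution x = r t turns their integrals against a
   test function phi into one-dimensional integrals int h(r) K(r) dr with K(r) = int t phi(t, r t) dt;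
   for a piecewise constant h these are combinations of the tail integrals Q(s) = int_s^oo K.
   Solving the Rankine-Hugoniot relations shows that, as eps1, eps2 -> 0, the intermediate density v_*
   blows up at least like 1/sqrt eps1, while u_* and both shock speeds tend to sigma = (u_- + u_+)/2 and the mass
   v_* (sigma2 - sigma1) tends to (v_- + v_+)(u_- - u_+)/2. So the u-profile converges to the single
   jump at sigma, while in the v-profile the term v_* (Q(sigma1) - Q(sigma2)), a mass times a difference
   quotient of Q, converges to w K(sigma): the delta on the line x = sigma t. *)

section \<open>Tail integrals\<close>

definition tail_integral :: "(real \<Rightarrow> real) \<Rightarrow> real \<Rightarrow> real" where
  "tail_integral K s = (\<integral>r. indicator {s..} r * K r \<partial>lborel)"

lemma integrable_indicator_mult:
  fixes K :: "real \<Rightarrow> real"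
  assumes "integrable lborel K" and "A \<in> sets borel"
  shows "integrable lborel (\<lambda>r. indicator A r * K r)"
  using integrable_real_mult_indicator[of A lborel K] assms by (simp add: mult.commute)

lemma integral_two_step_mult:
  fixes K :: "real \<Rightarrow> real"
  assumes K: "integrable lborel K"
  shows "(\<integral>r. (a + b * indicator {s..} r + c * indicator {s'..} r) * K r \<partial>lborel)
       = a * (\<integral>r. K r \<partial>lborel) + b * tail_integral K s + c * tail_integral K s'"
proof -
  have "integrable lborel (\<lambda>r. a * K r)" "integrable lborel (\<lambda>r. b * (indicator {s..} r * K r))"
    "integrable lborel (\<lambda>r. c * (indicator {s'..} r * K r))"
    using K integrable_indicator_mult[OF K] by simp_all
  then show ?thesis
    unfolding tail_integral_def by (simp add: distrib_right mult.assoc)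
qed

lemma tail_integral_diff:
  fixes K :: "real \<Rightarrow> real"
  assumes K: "integrable lborel K" and "s1 \<le> s2"
  shows "tail_integral K s1 - tail_integral K s2 = (\<integral>r. indicator {s1..<s2} r * K r \<partial>lborel)"
proof -
  have "tail_integral K s1 - tail_integral K s2
      = (\<integral>r. indicator {s1..} r * K r - indicator {s2..} r * K r \<partial>lborel)"
    unfolding tail_integral_def
    by (rule Bochner_Integration.integral_diff[symmetric]) (auto intro!: integrable_indicator_mult K)
  also have "\<dots> = (\<integral>r. indicator {s1..<s2} r * K r \<partial>lborel)"
    by (rule Bochner_Integration.integral_cong) (use \<open>s1 \<le> s2\<close> in \<open>auto simp: indicator_def\<close>)
  finally show ?thesis .
qed

lemma tail_integral_diff_approx:
  fixes K :: "real \<Rightarrow> real"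
  assumes K: "integrable lborel K" and s: "s1 \<le> s2"
    and close: "\<And>r. s1 \<le> r \<Longrightarrow> r \<le> s2 \<Longrightarrow> \<bar>K r - k\<bar> \<le> \<epsilon>"
  shows "\<bar>tail_integral K s1 - tail_integral K s2 - k * (s2 - s1)\<bar> \<le> \<epsilon> * (s2 - s1)"
proof -
  have const: "integrable lborel (\<lambda>r. indicator {s1..<s2} r * (c::real))" for c
    by (intro integrable_mult_left integrable_real_indicator emeasure_bounded_finite) auto
  have slab: "integrable lborel (\<lambda>r. indicator {s1..<s2} r * K r)"
    by (rule integrable_indicator_mult[OF K]) simp
  have int_const: "(\<integral>r. indicator {s1..<s2} r * (c::real) \<partial>lborel) = c * (s2 - s1)" for c
    using s by simp
  have "(\<integral>r. indicator {s1..<s2} r * (k - \<epsilon>) \<partial>lborel) \<le> (\<integral>r. indicator {s1..<s2} r * K r \<partial>lborel)"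
    using close by (intro integral_mono[OF const slab]) (fastforce simp: indicator_def abs_le_iff)
  moreover have "(\<integral>r. indicator {s1..<s2} r * K r \<partial>lborel) \<le> (\<integral>r. indicator {s1..<s2} r * (k + \<epsilon>) \<partial>lborel)"
    using close by (intro integral_mono[OF slab const]) (fastforce simp: indicator_def abs_le_iff)
  ultimately show ?thesis
    unfolding int_const tail_integral_diff[OF K s] by (simp add: abs_le_iff algebra_simps)
qed

lemma tail_integral_lipschitz:
  fixes K :: "real \<Rightarrow> real"
  assumes K: "integrable lborel K" and bound: "\<And>r. \<bar>K r\<bar> \<le> C"
  shows "\<bar>tail_integral K s - tail_integral K s'\<bar> \<le> C * \<bar>s - s'\<bar>"
proof (cases "s \<le> s'")
  case True
  then show ?thesis
    using tail_integral_diff_approx[OF K True, of 0 C] bound by simp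
next
  case False
  then show ?thesis
    using tail_integral_diff_approx[OF K, of s' s 0 C] bound by (simp add: abs_minus_commute)
qed

lemma tendsto_tail_integral:
  fixes K :: "real \<Rightarrow> real"
  assumes K: "integrable lborel K" and bound: "\<And>r. \<bar>K r\<bar> \<le> C" and f: "(f \<longlongrightarrow> \<sigma>) F"
  shows "((\<lambda>x. tail_integral K (f x)) \<longlongrightarrow> tail_integral K \<sigma>) F"
proof -
  have "((\<lambda>x. C * \<bar>f x - \<sigma>\<bar>) \<longlongrightarrow> C * \<bar>\<sigma> - \<sigma>\<bar>) F" by (intro tendsto_intros f)
  then have "((\<lambda>x. C * \<bar>f x - \<sigma>\<bar>) \<longlongrightarrow> 0) F" by simp
  moreover have "\<forall>\<^sub>F x in F. norm (tail_integral K (f x) - tail_integral K \<sigma>) \<le> C * \<bar>f x - \<sigma>\<bar>"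
    using tail_integral_lipschitz[OF K bound] by simp
  ultimately have "((\<lambda>x. tail_integral K (f x) - tail_integral K \<sigma>) \<longlongrightarrow> 0) F"
    by (rule Lim_null_comparison[rotated])
  then show ?thesis by (rule LIM_zero_cancel)
qed

lemma tail_integral_difference_quotient_tendsto:
  fixes K :: "real \<Rightarrow> real"
  assumes K: "integrable lborel K" and cont: "isCont K \<sigma>"
    and s1: "(s1 \<longlongrightarrow> \<sigma>) F" and s2: "(s2 \<longlongrightarrow> \<sigma>) F" and less: "\<forall>\<^sub>F x in F. s1 x < s2 x"
  shows "((\<lambda>x. (tail_integral K (s1 x) - tail_integral K (s2 x)) / (s2 x - s1 x)) \<longlongrightarrow> K \<sigma>) F"
proof (rule tendstoI)
  fix \<epsilon> :: real assume "\<epsilon> > 0"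
  then obtain \<delta> where "\<delta> > 0" and \<delta>: "\<And>r. dist r \<sigma> < \<delta> \<Longrightarrow> dist (K r) (K \<sigma>) < \<epsilon> / 2"
    using cont unfolding continuous_at_eps_delta by (metis half_gt_zero)
  from tendstoD[OF s1 \<open>\<delta> > 0\<close>] tendstoD[OF s2 \<open>\<delta> > 0\<close>] less
  show "\<forall>\<^sub>F x in F. dist ((tail_integral K (s1 x) - tail_integral K (s2 x)) / (s2 x - s1 x)) (K \<sigma>) < \<epsilon>"
  proof eventually_elim
    case (elim x)
    have "\<bar>K r - K \<sigma>\<bar> \<le> \<epsilon> / 2" if "s1 x \<le> r" "r \<le> s2 x" for r
      using \<delta>[of r] elim that by (fastforce simp: dist_real_def)
    then have approx: "\<bar>tail_integral K (s1 x) - tail_integral K (s2 x) - K \<sigma> * (s2 x - s1 x)\<bar>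
        \<le> \<epsilon> / 2 * (s2 x - s1 x)"
      using elim by (intro tail_integral_diff_approx[OF K]) auto
    have pos: "s2 x - s1 x > 0" using elim by simp
    have "\<bar>(tail_integral K (s1 x) - tail_integral K (s2 x)) / (s2 x - s1 x) - K \<sigma>\<bar>
        = \<bar>tail_integral K (s1 x) - tail_integral K (s2 x) - K \<sigma> * (s2 x - s1 x)\<bar> / (s2 x - s1 x)"
    proof -
      have "(tail_integral K (s1 x) - tail_integral K (s2 x)) / (s2 x - s1 x) - K \<sigma>
          = (tail_integral K (s1 x) - tail_integral K (s2 x) - K \<sigma> * (s2 x - s1 x)) / (s2 x - s1 x)"
        using pos by (simp add: field_simps)
      then show ?thesis using pos by simp
    qed
    also have "\<dots> \<le> \<epsilon> / 2" using approx pos by (simp add: divide_le_eq)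
    also have "\<dots> < \<epsilon>" using \<open>\<epsilon> > 0\<close> by simp
    finally show ?case by (simp add: dist_real_def)
  qed
qed

section \<open>Asymptotics of the two-shock solution\<close>

lemma two_shock_state_identities:
  fixes e1 e2 um vm up vp us vs :: real
  assumes vm: "vm > 0" and vp: "vp > 0" and st: "two_shock_state e1 e2 um vm up vp us vs"
  defines "Sa \<equiv> sqrt (e2\<^sup>2 + 4 * e1 * (vs + vm)\<^sup>2)"
    and "Sb \<equiv> sqrt (e2\<^sup>2 + 4 * e1 * (vs + vp)\<^sup>2)"
    and "ra \<equiv> (vs - vm) / (vs + vm)" and "rb \<equiv> (vs - vp) / (vs + vp)"
  shows "us = um - ra * (Sa - e2)"
    and "um - up = ra * (Sa - e2) + rb * (Sb + e2)"
    and "shock1_speed e2 um vm us vs = um - vs / (vs + vm) * (Sa - e2) - e2"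
    and "shock2_speed e2 up vp us vs = up + vs / (vs + vp) * (Sb + e2) - e2"
    and "vs * (shock2_speed e2 up vp us vs - shock1_speed e2 um vm us vs)
           = vp * (us - up) * (vs / (vs - vp)) + vm * (um - us) * (vs / (vs - vm))"
proof -
  have "vs > vm" "vs > vp" and us: "us = um + (vs - vm) * ((e2 - Sa) / (vs + vm))"
    and up: "up = us + (vp - vs) * ((e2 + Sb) / (vs + vp))"
    using st by (auto simp: two_shock_state_def Sa_def Sb_def)
  then have ne: "vs + vm \<noteq> 0" "vs + vp \<noteq> 0" "vs - vm \<noteq> 0" "vs - vp \<noteq> 0"
    using vm vp by auto
  show us': "us = um - ra * (Sa - e2)"
    unfolding ra_def us using ne by (simp add: field_simps)
  show "um - up = ra * (Sa - e2) + rb * (Sb + e2)"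
    using up us' ne unfolding rb_def by (simp add: field_simps)
  have "vs * (us - um) / (vs - vm) = vs * ((e2 - Sa) / (vs + vm))"
    unfolding us using ne(3) by simp
  then show "shock1_speed e2 um vm us vs = um - vs / (vs + vm) * (Sa - e2) - e2"
    unfolding shock1_speed_def by (simp add: diff_divide_distrib algebra_simps)
  have "vs * (up - us) / (vp - vs) = vs * ((e2 + Sb) / (vs + vp))"
    using up ne(4) by simp
  then show "shock2_speed e2 up vp us vs = up + vs / (vs + vp) * (Sb + e2) - e2"
    unfolding shock2_speed_def by (simp add: algebra_simps)
  show "vs * (shock2_speed e2 up vp us vs - shock1_speed e2 um vm us vs)
      = vp * (us - up) * (vs / (vs - vp)) + vm * (um - us) * (vs / (vs - vm))"
  proof -
    have flip: "vs * (up - us) / (vp - vs) = vs * (us - up) / (vs - vp)"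
      by (metis minus_diff_eq mult_minus_right minus_divide_divide)
    show ?thesis
      unfolding shock1_speed_def shock2_speed_def flip using ne by (simp add: field_simps)
  qed
qed

lemma abs_sqrt_sum_squares_diff_le:
  fixes p x y :: real
  shows "\<bar>sqrt (p\<^sup>2 + x\<^sup>2) - sqrt (p\<^sup>2 + y\<^sup>2)\<bar> \<le> \<bar>x - y\<bar>"
  using norm_triangle_ineq3[of "(p, x)" "(p, y)"] by (simp add: norm_Pair)

lemma two_shock_state_bounds:
  fixes e1 e2 um vm up vp us vs :: real
  assumes vm: "vm > 0" and vp: "vp > 0" and e1: "0 \<le> e1" and e2: "0 \<le> e2"
    and st: "two_shock_state e1 e2 um vm up vp us vs"
  defines "Sa \<equiv> sqrt (e2\<^sup>2 + 4 * e1 * (vs + vm)\<^sup>2)"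
    and "Sb \<equiv> sqrt (e2\<^sup>2 + 4 * e1 * (vs + vp)\<^sup>2)"
  shows "um - up \<le> 2 * e2 + 8 * sqrt e1 * vs"
    and "\<bar>Sa - Sb\<bar> \<le> 2 * sqrt e1 * \<bar>vm - vp\<bar>"
proof -
  define c where "c = 2 * sqrt e1"
  have c: "0 \<le> c" using e1 by (simp add: c_def)
  have vs: "vs > vm" "vs > vp" using st by (auto simp: two_shock_state_def)
  have Sa: "Sa = sqrt (e2\<^sup>2 + (c * (vs + vm))\<^sup>2)" and Sb: "Sb = sqrt (e2\<^sup>2 + (c * (vs + vp))\<^sup>2)"
    unfolding Sa_def Sb_def c_def using e1 by (simp_all add: power_mult_distrib)
  have "\<bar>Sa - Sb\<bar> \<le> \<bar>c * (vs + vm) - c * (vs + vp)\<bar>"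
    unfolding Sa Sb by (rule abs_sqrt_sum_squares_diff_le)
  also have "\<dots> = c * \<bar>vm - vp\<bar>"
  proof -
    have "c * (vs + vm) - c * (vs + vp) = c * (vm - vp)" by (simp add: algebra_simps)
    then show ?thesis using c by (simp add: abs_mult)
  qed
  finally show "\<bar>Sa - Sb\<bar> \<le> 2 * sqrt e1 * \<bar>vm - vp\<bar>" by (simp add: c_def)
  define ra where "ra = (vs - vm) / (vs + vm)"
  define rb where "rb = (vs - vp) / (vs + vp)"
  have ra: "0 \<le> ra" "ra \<le> 1" and rb: "0 \<le> rb" "rb \<le> 1"
    using vs vm vp by (auto simp: ra_def rb_def field_simps)
  have "e2 \<le> Sa" "0 \<le> Sb" unfolding Sa Sb by simp_all
  have Sa_le: "Sa \<le> e2 + c * (vs + vm)" and Sb_le: "Sb \<le> e2 + c * (vs + vp)"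
    unfolding Sa Sb
    using sqrt_sum_squares_le_sum_abs[of e2 "c * (vs + vm)"] sqrt_sum_squares_le_sum_abs[of e2 "c * (vs + vp)"]
      c e2 vs vm vp by (simp_all add: abs_mult)
  have "um - up = ra * (Sa - e2) + rb * (Sb + e2)"
    using two_shock_state_identities(2)[OF vm vp st] by (simp add: Sa_def Sb_def ra_def rb_def)
  also have "\<dots> \<le> (Sa - e2) + (Sb + e2)"
    using ra rb \<open>e2 \<le> Sa\<close> \<open>0 \<le> Sb\<close> e2 by (intro add_mono mult_left_le_one_le) auto
  also have "\<dots> \<le> 2 * e2 + c * (4 * vs)"
    using Sa_le Sb_le mult_left_mono[of "2 * vs + vm + vp" "4 * vs" c] c vs
    by (simp add: algebra_simps)
  finally show "um - up \<le> 2 * e2 + 8 * sqrt e1 * vs" by (simp add: c_def)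
qed

lemma tendsto_shifted_ratio_one:
  fixes v :: "'a \<Rightarrow> real"
  assumes "filterlim v at_top F"
  shows "((\<lambda>x. (v x + d) / (v x + c)) \<longlongrightarrow> 1) F"
proof -
  have "filterlim (\<lambda>x. c + v x) at_infinity F"
    by (intro filterlim_at_top_imp_at_infinity filterlim_tendsto_add_at_top[OF tendsto_const assms])
  then have "((\<lambda>x. 1 + (d - c) / (c + v x)) \<longlongrightarrow> 1 + 0) F"
    by (intro tendsto_add tendsto_const tendsto_divide_0[OF tendsto_const])
  moreover have "\<forall>\<^sub>F x in F. 1 + (d - c) / (c + v x) = (v x + d) / (v x + c)"
    using filterlim_at_top_dense[THEN iffD1, OF assms, rule_format, of "- c"]
    by eventually_elim (simp add: field_simps)
  ultimately show ?thesis by (simp add: tendsto_cong)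
qed

lemma two_shock_state_vs_at_top:
  fixes e1 e2 us vs :: "'a \<Rightarrow> real"
  assumes vm: "vm > 0" and vp: "vp > 0" and "um > up"
    and e1: "(e1 \<longlongrightarrow> 0) F" and e2: "(e2 \<longlongrightarrow> 0) F"
    and sol: "\<forall>\<^sub>F x in F. 0 < e1 x \<and> 0 < e2 x \<and> two_shock_state (e1 x) (e2 x) um vm up vp (us x) (vs x)"
  shows "filterlim vs at_top F"
proof -
  define \<Delta> where "\<Delta> = um - up"
  have \<Delta>: "\<Delta> > 0" using \<open>um > up\<close> by (simp add: \<Delta>_def)
  have "\<forall>\<^sub>F x in F. e2 x < \<Delta> / 4" using order_tendstoD(2)[OF e2, of "\<Delta> / 4"] \<Delta> by simp
  with sol have inv_bound: "\<forall>\<^sub>F x in F. 0 < 1 / vs x \<and> 1 / vs x \<le> 16 * sqrt (e1 x) / \<Delta>"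
  proof eventually_elim
    case (elim x)
    then have "vs x > 0" and "\<Delta> \<le> 2 * e2 x + 8 * sqrt (e1 x) * vs x"
      using two_shock_state_bounds(1)[OF vm vp, of "e1 x" "e2 x" um up "us x" "vs x"] vm
      by (auto simp: \<Delta>_def two_shock_state_def)
    moreover have "8 * sqrt (e1 x) * vs x = 8 * (sqrt (e1 x) * vs x)" by simp
    ultimately have "\<Delta> \<le> 16 * (sqrt (e1 x) * vs x)" using elim by linarith
    then show ?case using \<open>vs x > 0\<close> \<Delta> by (simp add: field_simps)
  qed
  have "((\<lambda>x. 16 * sqrt (e1 x) / \<Delta>) \<longlongrightarrow> 16 * sqrt 0 / \<Delta>) F"
    by (intro tendsto_intros e1) (use \<Delta> in auto)
  then have "((\<lambda>x. 16 * sqrt (e1 x) / \<Delta>) \<longlongrightarrow> 0) F" by simp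
  moreover have "\<forall>\<^sub>F x in F. norm (1 / vs x) \<le> 16 * sqrt (e1 x) / \<Delta>"
    using inv_bound by eventually_elim simp
  ultimately have "((\<lambda>x. 1 / vs x) \<longlongrightarrow> 0) F"
    by (rule Lim_null_comparison[rotated])
  moreover have "\<forall>\<^sub>F x in F. 0 < 1 / vs x"
    using inv_bound by eventually_elim simp
  ultimately show ?thesis
    using filterlim_inverse_at_top by fastforce
qed

lemma two_shock_state_root_limits:
  fixes e1 e2 us vs :: "'a \<Rightarrow> real"
  assumes vm: "vm > 0" and vp: "vp > 0" and "um > up"
    and e1: "(e1 \<longlongrightarrow> 0) F" and e2: "(e2 \<longlongrightarrow> 0) F"
    and sol: "\<forall>\<^sub>F x in F. 0 < e1 x \<and> 0 < e2 x \<and> two_shock_state (e1 x) (e2 x) um vm up vp (us x) (vs x)"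
  shows "((\<lambda>x. sqrt ((e2 x)\<^sup>2 + 4 * e1 x * (vs x + vm)\<^sup>2)) \<longlongrightarrow> (um - up) / 2) F"
    and "((\<lambda>x. sqrt ((e2 x)\<^sup>2 + 4 * e1 x * (vs x + vp)\<^sup>2)) \<longlongrightarrow> (um - up) / 2) F"
proof -
  define Sa where "Sa x = sqrt ((e2 x)\<^sup>2 + 4 * e1 x * (vs x + vm)\<^sup>2)" for x
  define Sb where "Sb x = sqrt ((e2 x)\<^sup>2 + 4 * e1 x * (vs x + vp)\<^sup>2)" for x
  define ra where "ra x = (vs x - vm) / (vs x + vm)" for x
  define rb where "rb x = (vs x - vp) / (vs x + vp)" for x
  have top: "filterlim vs at_top F" by (rule two_shock_state_vs_at_top[OF assms])
  have ra: "(ra \<longlongrightarrow> 1) F" and rb: "(rb \<longlongrightarrow> 1) F"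
    using tendsto_shifted_ratio_one[OF top, of "- vm" vm] tendsto_shifted_ratio_one[OF top, of "- vp" vp]
    by (simp_all add: ra_def[abs_def] rb_def[abs_def])
  have "((\<lambda>x. 2 * sqrt (e1 x) * \<bar>vm - vp\<bar>) \<longlongrightarrow> 2 * sqrt 0 * \<bar>vm - vp\<bar>) F"
    by (intro tendsto_intros e1)
  then have "((\<lambda>x. 2 * sqrt (e1 x) * \<bar>vm - vp\<bar>) \<longlongrightarrow> 0) F" by simp
  moreover have "\<forall>\<^sub>F x in F. norm (Sa x - Sb x) \<le> 2 * sqrt (e1 x) * \<bar>vm - vp\<bar>"
    using sol by eventually_elim (use two_shock_state_bounds(2)[OF vm vp] in \<open>auto simp: Sa_def Sb_def\<close>)
  ultimately have diff: "((\<lambda>x. Sa x - Sb x) \<longlongrightarrow> 0) F"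
    by (rule Lim_null_comparison[rotated])
  \<comment> \<open>The jump identity \<open>um - up = ra (Sa - e2) + rb (Sb + e2)\<close> solved for Sa.\<close>
  have "((\<lambda>x. (um - up + ra x * e2 x - rb x * (e2 x - (Sa x - Sb x))) / (ra x + rb x))
      \<longlongrightarrow> (um - up + 1 * 0 - 1 * (0 - 0)) / (1 + 1)) F"
    by (intro tendsto_intros ra rb e2 diff) simp
  moreover have "\<forall>\<^sub>F x in F. (um - up + ra x * e2 x - rb x * (e2 x - (Sa x - Sb x))) / (ra x + rb x) = Sa x"
    using sol
  proof eventually_elim
    case (elim x)
    then have st: "two_shock_state (e1 x) (e2 x) um vm up vp (us x) (vs x)" by simp
    then have "ra x > 0" "rb x > 0"
      using vm vp by (auto simp: ra_def rb_def two_shock_state_def)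
    moreover have "um - up = ra x * (Sa x - e2 x) + rb x * (Sb x + e2 x)"
      using two_shock_state_identities(2)[OF vm vp st] by (simp add: Sa_def Sb_def ra_def rb_def)
    ultimately show ?case by (simp add: field_simps)
  qed
  ultimately have Sa: "(Sa \<longlongrightarrow> (um - up) / 2) F"
    by (simp add: tendsto_cong)
  then show "((\<lambda>x. sqrt ((e2 x)\<^sup>2 + 4 * e1 x * (vs x + vm)\<^sup>2)) \<longlongrightarrow> (um - up) / 2) F"
    by (simp add: Sa_def[abs_def])
  have "((\<lambda>x. Sa x - (Sa x - Sb x)) \<longlongrightarrow> (um - up) / 2 - 0) F"
    by (intro tendsto_intros Sa diff)
  then show "((\<lambda>x. sqrt ((e2 x)\<^sup>2 + 4 * e1 x * (vs x + vp)\<^sup>2)) \<longlongrightarrow> (um - up) / 2) F"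
    by (simp add: Sb_def[abs_def])
qed

lemma two_shock_state_speed_limits:
  fixes e1 e2 us vs :: "'a \<Rightarrow> real"
  assumes vm: "vm > 0" and vp: "vp > 0" and "um > up"
    and e1: "(e1 \<longlongrightarrow> 0) F" and e2: "(e2 \<longlongrightarrow> 0) F"
    and sol: "\<forall>\<^sub>F x in F. 0 < e1 x \<and> 0 < e2 x \<and> two_shock_state (e1 x) (e2 x) um vm up vp (us x) (vs x)"
  shows "(us \<longlongrightarrow> (um + up) / 2) F"
    and "((\<lambda>x. shock1_speed (e2 x) um vm (us x) (vs x)) \<longlongrightarrow> (um + up) / 2) F"
    and "((\<lambda>x. shock2_speed (e2 x) up vp (us x) (vs x)) \<longlongrightarrow> (um + up) / 2) F"
proof -
  define Sa where "Sa x = sqrt ((e2 x)\<^sup>2 + 4 * e1 x * (vs x + vm)\<^sup>2)" for x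
  define Sb where "Sb x = sqrt ((e2 x)\<^sup>2 + 4 * e1 x * (vs x + vp)\<^sup>2)" for x
  define ra where "ra x = (vs x - vm) / (vs x + vm)" for x
  have Sa: "(Sa \<longlongrightarrow> (um - up) / 2) F" and Sb: "(Sb \<longlongrightarrow> (um - up) / 2) F"
    using two_shock_state_root_limits[OF assms] by (simp_all add: Sa_def[abs_def] Sb_def[abs_def])
  have top: "filterlim vs at_top F" by (rule two_shock_state_vs_at_top[OF assms])
  have ra: "(ra \<longlongrightarrow> 1) F"
    using tendsto_shifted_ratio_one[OF top, of "- vm" vm] by (simp add: ra_def[abs_def])
  have ratio: "((\<lambda>x. vs x / (vs x + c)) \<longlongrightarrow> 1) F" for c
    using tendsto_shifted_ratio_one[OF top, of 0 c] by simp
  have ids: "\<forall>\<^sub>F x in F. us x = um - ra x * (Sa x - e2 x)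
      \<and> shock1_speed (e2 x) um vm (us x) (vs x) = um - vs x / (vs x + vm) * (Sa x - e2 x) - e2 x
      \<and> shock2_speed (e2 x) up vp (us x) (vs x) = up + vs x / (vs x + vp) * (Sb x + e2 x) - e2 x"
    using sol
  proof eventually_elim
    case (elim x)
    then have "two_shock_state (e1 x) (e2 x) um vm up vp (us x) (vs x)" by simp
    from two_shock_state_identities[OF vm vp this] show ?case by (simp add: Sa_def Sb_def ra_def)
  qed
  have "((\<lambda>x. um - ra x * (Sa x - e2 x)) \<longlongrightarrow> um - 1 * ((um - up) / 2 - 0)) F"
    by (intro tendsto_intros ra Sa e2)
  then have "((\<lambda>x. um - ra x * (Sa x - e2 x)) \<longlongrightarrow> (um + up) / 2) F"
    by (rule tendsto_eq_rhs) (simp add: field_simps)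
  then show "(us \<longlongrightarrow> (um + up) / 2) F"
    by (rule Lim_transform_eventually) (use ids in \<open>eventually_elim, metis\<close>)
  have "((\<lambda>x. um - vs x / (vs x + vm) * (Sa x - e2 x) - e2 x) \<longlongrightarrow> um - 1 * ((um - up) / 2 - 0) - 0) F"
    by (intro tendsto_intros ratio Sa e2)
  then have "((\<lambda>x. um - vs x / (vs x + vm) * (Sa x - e2 x) - e2 x) \<longlongrightarrow> (um + up) / 2) F"
    by (rule tendsto_eq_rhs) (simp add: field_simps)
  then show "((\<lambda>x. shock1_speed (e2 x) um vm (us x) (vs x)) \<longlongrightarrow> (um + up) / 2) F"
    by (rule Lim_transform_eventually) (use ids in \<open>eventually_elim, metis\<close>)
  have "((\<lambda>x. up + vs x / (vs x + vp) * (Sb x + e2 x) - e2 x) \<longlongrightarrow> up + 1 * ((um - up) / 2 + 0) - 0) F"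
    by (intro tendsto_intros ratio Sb e2)
  then have "((\<lambda>x. up + vs x / (vs x + vp) * (Sb x + e2 x) - e2 x) \<longlongrightarrow> (um + up) / 2) F"
    by (rule tendsto_eq_rhs) (simp add: field_simps)
  then show "((\<lambda>x. shock2_speed (e2 x) up vp (us x) (vs x)) \<longlongrightarrow> (um + up) / 2) F"
    by (rule Lim_transform_eventually) (use ids in \<open>eventually_elim, metis\<close>)
qed

lemma two_shock_state_mass_limit:
  fixes e1 e2 us vs :: "'a \<Rightarrow> real"
  assumes vm: "vm > 0" and vp: "vp > 0" and "um > up"
    and e1: "(e1 \<longlongrightarrow> 0) F" and e2: "(e2 \<longlongrightarrow> 0) F"
    and sol: "\<forall>\<^sub>F x in F. 0 < e1 x \<and> 0 < e2 x \<and> two_shock_state (e1 x) (e2 x) um vm up vp (us x) (vs x)"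
  defines "s1 \<equiv> \<lambda>x. shock1_speed (e2 x) um vm (us x) (vs x)"
    and "s2 \<equiv> \<lambda>x. shock2_speed (e2 x) up vp (us x) (vs x)"
  shows "((\<lambda>x. vs x * (s2 x - s1 x)) \<longlongrightarrow> (vm + vp) / 2 * (um - up)) F"
    and "\<forall>\<^sub>F x in F. s1 x < s2 x"
proof -
  have top: "filterlim vs at_top F" by (rule two_shock_state_vs_at_top[OF assms(1-6)])
  have ratio: "((\<lambda>x. vs x / (vs x + c)) \<longlongrightarrow> 1) F" for c
    using tendsto_shifted_ratio_one[OF top, of 0 c] by simp
  have ids: "\<forall>\<^sub>F x in F. vs x > 0 \<and>
      vs x * (s2 x - s1 x) = vp * (us x - up) * (vs x / (vs x + - vp)) + vm * (um - us x) * (vs x / (vs x + - vm))"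
    using sol
  proof eventually_elim
    case (elim x)
    then have st: "two_shock_state (e1 x) (e2 x) um vm up vp (us x) (vs x)" by simp
    then have "vs x > 0" using vm by (auto simp: two_shock_state_def)
    with two_shock_state_identities(5)[OF vm vp st] show ?case by (simp add: s1_def s2_def)
  qed
  have "((\<lambda>x. vp * (us x - up) * (vs x / (vs x + - vp)) + vm * (um - us x) * (vs x / (vs x + - vm)))
      \<longlongrightarrow> vp * ((um + up) / 2 - up) * 1 + vm * (um - (um + up) / 2) * 1) F"
    by (intro tendsto_intros ratio two_shock_state_speed_limits(1)[OF assms(1-6)])
  then have "((\<lambda>x. vp * (us x - up) * (vs x / (vs x + - vp)) + vm * (um - us x) * (vs x / (vs x + - vm)))
      \<longlongrightarrow> (vm + vp) / 2 * (um - up)) F"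
    by (rule tendsto_eq_rhs) (simp add: field_simps)
  then show mass: "((\<lambda>x. vs x * (s2 x - s1 x)) \<longlongrightarrow> (vm + vp) / 2 * (um - up)) F"
    by (rule Lim_transform_eventually) (use ids in \<open>eventually_elim, metis\<close>)
  have "(vm + vp) / 2 * (um - up) > 0" using vm vp \<open>um > up\<close> by simp
  from order_tendstoD(1)[OF mass this] ids show "\<forall>\<^sub>F x in F. s1 x < s2 x"
  proof eventually_elim
    case (elim x)
    from elim(1) conjunct1[OF elim(2)] show ?case by (simp add: zero_less_mult_iff)
  qed
qed

section \<open>Self-similar profiles tested against a test function\<close>

lemma integrable_bounded_support_cbox:
  fixes f :: "'a::euclidean_space \<Rightarrow> real"
  assumes meas: "f \<in> borel_measurable lborel" and bound: "\<And>z. \<bar>f z\<bar> \<le> C"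
    and supp: "\<And>z. f z \<noteq> 0 \<Longrightarrow> z \<in> cbox a b"
  shows "integrable lborel f"
proof -
  have "integrable lborel (\<lambda>x. indicator (cbox a b) x * C)"
    by (intro integrable_mult_left integrable_real_indicator emeasure_bounded_finite) auto
  moreover have "AE x in lborel. norm (f x) \<le> norm (indicator (cbox a b) x * C)"
  proof (intro AE_I2)
    fix x show "norm (f x) \<le> norm (indicator (cbox a b) x * C)"
      using bound[of x] supp[of x] by (cases "f x = 0") (auto simp: indicator_def)
  qed
  ultimately show ?thesis using Bochner_Integration.integrable_bound meas by blast
qed

lemma borel_measurable_pair_projections [measurable]:
  "fst \<in> borel_measurable (borel :: (real \<times> real) measure)"
  "snd \<in> borel_measurable (borel :: (real \<times> real) measure)"
  by (intro borel_measurable_continuous_onI continuous_intros)+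

locale strip_supported =
  fixes \<phi> :: "real \<times> real \<Rightarrow> real" and T1 T2 X M :: real
  assumes continuous: "continuous_on UNIV \<phi>"
    and T1_pos: "0 < T1"
    and support: "\<And>z. \<phi> z \<noteq> 0 \<Longrightarrow> T1 \<le> fst z \<and> fst z \<le> T2 \<and> \<bar>snd z\<bar> \<le> X"
    and bounded: "\<And>z. \<bar>\<phi> z\<bar> \<le> M"
begin

lemma measurable_phi [measurable]: "\<phi> \<in> borel_measurable borel"
  using continuous by (rule borel_measurable_continuous_onI)

lemma isCont_phi: "isCont \<phi> z"
  using continuous continuous_on_eq_continuous_at open_UNIV by blast

lemma support_ray:
  assumes "\<phi> (t, t * r) \<noteq> 0"
  shows "T1 \<le> t" and "t \<le> T2" and "\<bar>r\<bar> \<le> X / T1"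
proof -
  from support[OF assms] show "T1 \<le> t" "t \<le> T2" by auto
  have "T1 * \<bar>r\<bar> \<le> t * \<bar>r\<bar>" using \<open>T1 \<le> t\<close> by (intro mult_right_mono) auto
  also have "\<dots> \<le> X" using support[OF assms] T1_pos \<open>T1 \<le> t\<close> by (simp add: abs_mult)
  finally show "\<bar>r\<bar> \<le> X / T1" using T1_pos by (simp add: field_simps)
qed

(* Substituting x = r t, with Jacobian t, turns an integral of a self-similar profile h (x / t)
   against phi into the integral of h against this weight. *)
definition ray_integral :: "real \<Rightarrow> real" where
  "ray_integral r = (\<integral>t. t * \<phi> (t, t * r) \<partial>lborel)"

lemma ray_integral_support: "ray_integral r \<noteq> 0 \<Longrightarrow> \<bar>r\<bar> \<le> X / T1"
proof (rule ccontr)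
  assume "ray_integral r \<noteq> 0" "\<not> \<bar>r\<bar> \<le> X / T1"
  then have "(\<lambda>t. t * \<phi> (t, t * r)) = (\<lambda>t. 0)" using support_ray(3) by fastforce
  with \<open>ray_integral r \<noteq> 0\<close> show False by (simp add: ray_integral_def)
qed

lemma continuous_on_ray_integral: "continuous_on UNIV ray_integral"
proof (rule continuous_on_sequentiallyI)
  fix u a assume u: "u \<longlonglongrightarrow> (a::real)"
  show "(\<lambda>n. ray_integral (u n)) \<longlonglongrightarrow> ray_integral a"
    unfolding ray_integral_def
  proof (rule integral_dominated_convergence[where w = "\<lambda>t. indicator {T1..T2} t * (T2 * M)"])
    show "integrable lborel (\<lambda>t. indicator {T1..T2} t * (T2 * M))"
      by (intro integrable_mult_left integrable_real_indicator emeasure_bounded_finite) auto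
    show "AE t in lborel. (\<lambda>n. t * \<phi> (t, t * u n)) \<longlonglongrightarrow> t * \<phi> (t, t * a)"
      using u by (intro AE_I2 tendsto_mult tendsto_const isCont_tendsto_compose[OF isCont_phi] tendsto_intros)
    show "AE t in lborel. norm (t * \<phi> (t, t * u n)) \<le> indicator {T1..T2} t * (T2 * M)" for n
    proof (intro AE_I2)
      fix t :: real
      show "norm (t * \<phi> (t, t * u n)) \<le> indicator {T1..T2} t * (T2 * M)"
      proof (cases "\<phi> (t, t * u n) = 0")
        case False
        then have "T1 \<le> t" "t \<le> T2" using support_ray by auto
        then show ?thesis using T1_pos bounded[of "(t, t * u n)"]
          by (auto simp: indicator_def abs_mult intro!: mult_mono)
      qed (use T1_pos bounded[of 0] in \<open>auto simp: indicator_def\<close>)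
    qed
  qed simp_all
qed

lemma integrable_ray_integral: "integrable lborel ray_integral"
  and ray_integral_bounded: "\<exists>C. \<forall>r. \<bar>ray_integral r\<bar> \<le> C"
proof -
  have "compact (ray_integral ` cbox (- (X / T1)) (X / T1))"
    by (intro compact_continuous_image continuous_on_subset[OF continuous_on_ray_integral]) auto
  then obtain C where C: "\<forall>y \<in> ray_integral ` cbox (- (X / T1)) (X / T1). norm y \<le> C"
    using compact_imp_bounded bounded_iff by metis
  have supp: "r \<in> cbox (- (X / T1)) (X / T1)" if "ray_integral r \<noteq> 0" for r
    using ray_integral_support[OF that] by (auto simp: abs_le_iff)
  have bound: "\<bar>ray_integral r\<bar> \<le> max 0 C" for r
  proof (cases "ray_integral r = 0")
    case False
    then have "norm (ray_integral r) \<le> C" using C supp[OF False] by blast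
    then show ?thesis by simp
  qed simp
  then show "\<exists>C. \<forall>r. \<bar>ray_integral r\<bar> \<le> C" by blast
  have "ray_integral \<in> borel_measurable lborel"
    unfolding measurable_lborel2 by (rule borel_measurable_continuous_onI[OF continuous_on_ray_integral])
  then show "integrable lborel ray_integral"
    using bound supp by (rule integrable_bounded_support_cbox)
qed

lemma integral_rescale_fiber:
  fixes h :: "real \<Rightarrow> real"
  shows "(\<integral>x. h (x / t) * \<phi> (t, x) \<partial>lborel) = (\<integral>r. t * (h r * \<phi> (t, t * r)) \<partial>lborel)"
proof (cases "t > 0")
  case True
  have "(\<integral>x. h (x / t) * \<phi> (t, x) \<partial>lborel) = \<bar>t\<bar> *\<^sub>R (\<integral>r. h ((0 + t * r) / t) * \<phi> (t, 0 + t * r) \<partial>lborel)"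
    by (rule lborel_integral_real_affine) (use True in auto)
  then show ?thesis using True by simp
next
  case False
  then have "\<phi> (t, x) = 0" for x using support[of "(t, x)"] T1_pos by auto
  then show ?thesis by simp
qed

lemma integrable_self_similar:
  fixes h :: "real \<Rightarrow> real"
  assumes [measurable]: "h \<in> borel_measurable borel" and h_bound: "\<And>r. \<bar>h r\<bar> \<le> B"
  shows "integrable (lborel \<Otimes>\<^sub>M lborel) (\<lambda>z. h (snd z / fst z) * \<phi> z)"
proof -
  have "0 \<le> B" using h_bound[of 0] by linarith
  show ?thesis
    unfolding lborel_prod
  proof (rule integrable_bounded_support_cbox[where C = "B * M" and a = "(T1, - X)" and b = "(T2, X)"])
    show "(\<lambda>z. h (snd z / fst z) * \<phi> z) \<in> borel_measurable lborel"
      unfolding measurable_lborel1 by measurable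
    show "\<bar>h (snd z / fst z) * \<phi> z\<bar> \<le> B * M" for z
      unfolding abs_mult by (intro mult_mono h_bound bounded) (use \<open>0 \<le> B\<close> in auto)
    show "z \<in> cbox (T1, - X) (T2, X)" if "h (snd z / fst z) * \<phi> z \<noteq> 0" for z
      using that support[of z] by (cases z) (auto simp: cbox_Pair_eq)
  qed
qed

lemma integrable_self_similar_rescaled:
  fixes h :: "real \<Rightarrow> real"
  assumes [measurable]: "h \<in> borel_measurable borel" and h_bound: "\<And>r. \<bar>h r\<bar> \<le> B"
  shows "integrable (lborel \<Otimes>\<^sub>M lborel) (\<lambda>(t, r). t * (h r * \<phi> (t, t * r)))"
proof -
  have "0 \<le> B" "0 \<le> M" using h_bound[of 0] bounded[of 0] by linarith+
  show ?thesis
    unfolding lborel_prod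
  proof (rule integrable_bounded_support_cbox[where C = "\<bar>T2\<bar> * B * M" and a = "(T1, - (X / T1))" and b = "(T2, X / T1)"])
    show "(\<lambda>(t, r). t * (h r * \<phi> (t, t * r))) \<in> borel_measurable lborel"
      unfolding measurable_lborel1 by measurable
    show "\<bar>(\<lambda>(t, r). t * (h r * \<phi> (t, t * r))) z\<bar> \<le> \<bar>T2\<bar> * B * M" for z
    proof (cases z)
      case (Pair t r)
      show ?thesis
      proof (cases "\<phi> (t, t * r) = 0")
        case False
        then have "\<bar>t\<bar> \<le> T2" using support_ray[OF False] T1_pos by auto
        then have "\<bar>t\<bar> * (\<bar>h r\<bar> * \<bar>\<phi> (t, t * r)\<bar>) \<le> \<bar>T2\<bar> * (B * M)"
          by (intro mult_mono h_bound bounded) (use \<open>0 \<le> B\<close> \<open>0 \<le> M\<close> in auto)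
        then show ?thesis by (simp add: Pair abs_mult mult.assoc)
      qed (use Pair \<open>0 \<le> B\<close> \<open>0 \<le> M\<close> in auto)
    qed
    show "z \<in> cbox (T1, - (X / T1)) (T2, X / T1)" if "(\<lambda>(t, r). t * (h r * \<phi> (t, t * r))) z \<noteq> 0" for z
      using that support_ray[of "fst z" "snd z"] by (cases z) (auto simp: cbox_Pair_eq abs_le_iff)
  qed
qed

lemma integral_self_similar:
  fixes h :: "real \<Rightarrow> real"
  assumes [measurable]: "h \<in> borel_measurable borel" and h_bound: "\<And>r. \<bar>h r\<bar> \<le> B"
  shows "(\<integral>z. h (snd z / fst z) * \<phi> z \<partial>lborel) = (\<integral>r. h r * ray_integral r \<partial>lborel)"
proof -
  have "(\<integral>z. h (snd z / fst z) * \<phi> z \<partial>lborel) = (\<integral>t. \<integral>x. h (x / t) * \<phi> (t, x) \<partial>lborel \<partial>lborel)"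
    using lborel_pair.integral_fst'[OF integrable_self_similar[OF assms]] by (simp add: lborel_prod)
  also have "\<dots> = (\<integral>t. \<integral>r. t * (h r * \<phi> (t, t * r)) \<partial>lborel \<partial>lborel)"
    by (simp only: integral_rescale_fiber)
  also have "\<dots> = (\<integral>r. \<integral>t. t * (h r * \<phi> (t, t * r)) \<partial>lborel \<partial>lborel)"
    using lborel_pair.Fubini_integral[OF integrable_self_similar_rescaled[OF assms]] by simp
  also have "\<dots> = (\<integral>r. h r * ray_integral r \<partial>lborel)"
  proof (rule Bochner_Integration.integral_cong[OF refl])
    fix r
    have "(\<integral>t. t * (h r * \<phi> (t, t * r)) \<partial>lborel) = (\<integral>t. h r * (t * \<phi> (t, t * r)) \<partial>lborel)"
      by (simp only: mult.left_commute)
    then show "(\<integral>t. t * (h r * \<phi> (t, t * r)) \<partial>lborel) = h r * ray_integral r"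
      by (simp add: ray_integral_def)
  qed
  finally show ?thesis .
qed

lemma integral_three_state:
  assumes "s1 \<le> s2"
  shows "(\<integral>z. three_state a b c s1 s2 z * \<phi> z \<partial>lborel)
    = a * (\<integral>r. ray_integral r \<partial>lborel) + (b - a) * tail_integral ray_integral s1
      + (c - b) * tail_integral ray_integral s2"
proof -
  define h where "h r = a + (b - a) * indicator {s1..} r + (c - b) * indicator {s2..} r" for r :: real
  have "three_state a b c s1 s2 z = h (snd z / fst z)" for z
    using assms unfolding three_state_def Let_def h_def by (auto simp: indicator_def)
  then have "(\<integral>z. three_state a b c s1 s2 z * \<phi> z \<partial>lborel) = (\<integral>z. h (snd z / fst z) * \<phi> z \<partial>lborel)"
    by simp
  also have "\<dots> = (\<integral>r. h r * ray_integral r \<partial>lborel)"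
  proof (rule integral_self_similar)
    show "h \<in> borel_measurable borel" unfolding h_def by measurable
    show "\<bar>h r\<bar> \<le> \<bar>a\<bar> + \<bar>b - a\<bar> + \<bar>c - b\<bar>" for r
      unfolding h_def indicator_def by (auto; arith)
  qed
  finally have "(\<integral>z. three_state a b c s1 s2 z * \<phi> z \<partial>lborel) = (\<integral>r. h r * ray_integral r \<partial>lborel)" .
  then show ?thesis
    unfolding h_def using integral_two_step_mult[OF integrable_ray_integral] by simp
qed

lemma integral_Heaviside_jump:
  "(\<integral>z. (a + (c - a) * Heaviside (snd z - s * fst z)) * \<phi> z \<partial>lborel)
    = a * (\<integral>r. ray_integral r \<partial>lborel) + (c - a) * tail_integral ray_integral s"
proof -
  have "(\<lambda>z. (a + (c - a) * Heaviside (snd z - s * fst z)) * \<phi> z) = (\<lambda>z. three_state a a c s s z * \<phi> z)"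
  proof (rule ext)
    fix z
    show "(a + (c - a) * Heaviside (snd z - s * fst z)) * \<phi> z = three_state a a c s s z * \<phi> z"
    proof (cases "\<phi> z = 0")
    case False
      then have "fst z > 0" using support[of z] T1_pos by auto
      then have "(snd z - s * fst z \<ge> 0) = (snd z / fst z \<ge> s)" by (simp add: field_simps)
      then show ?thesis by (auto simp: Heaviside_def three_state_def Let_def)
    qed simp
  qed
  then show ?thesis using integral_three_state[of s s a a c] by simp
qed

lemma set_integral_ray:
  "(LINT t:{0<..}|lborel. w * t * \<phi> (t, s * t)) = w * ray_integral s"
proof -
  have "(\<lambda>t. indicator {0<..} t *\<^sub>R (w * t * \<phi> (t, s * t))) = (\<lambda>t. w * (t * \<phi> (t, t * s)))"
  proof (rule ext)
    fix t :: real
    show "indicator {0<..} t *\<^sub>R (w * t * \<phi> (t, s * t)) = w * (t * \<phi> (t, t * s))"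
      using support[of "(t, s * t)"] T1_pos by (cases "t > 0") (auto simp: indicator_def mult.commute)
  qed
  then show ?thesis by (simp add: set_lebesgue_integral_def ray_integral_def)
qed

lemma three_state_tendsto_jump:
  assumes "(b \<longlongrightarrow> b0) F" and s1: "(s1 \<longlongrightarrow> \<sigma>) F" and s2: "(s2 \<longlongrightarrow> \<sigma>) F"
    and le: "\<forall>\<^sub>F x in F. s1 x \<le> s2 x"
  shows "((\<lambda>x. \<integral>z. three_state a (b x) c (s1 x) (s2 x) z * \<phi> z \<partial>lborel)
    \<longlongrightarrow> (\<integral>z. (a + (c - a) * Heaviside (snd z - \<sigma> * fst z)) * \<phi> z \<partial>lborel)) F"
proof -
  obtain C where C: "\<And>r. \<bar>ray_integral r\<bar> \<le> C" using ray_integral_bounded by blast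
  let ?Q = "tail_integral ray_integral" and ?T = "\<integral>r. ray_integral r \<partial>lborel"
  have "((\<lambda>x. a * ?T + (b x - a) * ?Q (s1 x) + (c - b x) * ?Q (s2 x))
      \<longlongrightarrow> a * ?T + (b0 - a) * ?Q \<sigma> + (c - b0) * ?Q \<sigma>) F"
    using integrable_ray_integral C
    by (intro tendsto_intros assms tendsto_tail_integral)
  then have "((\<lambda>x. a * ?T + (b x - a) * ?Q (s1 x) + (c - b x) * ?Q (s2 x))
      \<longlongrightarrow> a * ?T + (c - a) * ?Q \<sigma>) F"
    by (rule tendsto_eq_rhs) (simp add: algebra_simps)
  then show ?thesis
    unfolding integral_Heaviside_jump
    by (rule Lim_transform_eventually) (use le in \<open>eventually_elim, simp add: integral_three_state\<close>)
qed

lemma three_state_tendsto_delta: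
  assumes s1: "(s1 \<longlongrightarrow> \<sigma>) F" and s2: "(s2 \<longlongrightarrow> \<sigma>) F"
    and less: "\<forall>\<^sub>F x in F. s1 x < s2 x" and mass: "((\<lambda>x. b x * (s2 x - s1 x)) \<longlongrightarrow> w) F"
  shows "((\<lambda>x. \<integral>z. three_state a (b x) c (s1 x) (s2 x) z * \<phi> z \<partial>lborel)
    \<longlongrightarrow> (\<integral>z. (a + (c - a) * Heaviside (snd z - \<sigma> * fst z)) * \<phi> z \<partial>lborel)
      + (LINT t:{0<..}|lborel. w * t * \<phi> (t, \<sigma> * t))) F"
proof -
  obtain C where C: "\<And>r. \<bar>ray_integral r\<bar> \<le> C" using ray_integral_bounded by blast
  let ?Q = "tail_integral ray_integral" and ?T = "\<integral>r. ray_integral r \<partial>lborel"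
  have "isCont ray_integral \<sigma>"
    using continuous_on_ray_integral continuous_on_eq_continuous_at open_UNIV by blast
  then have "((\<lambda>x. a * ?T - a * ?Q (s1 x) + c * ?Q (s2 x)
        + b x * (s2 x - s1 x) * ((?Q (s1 x) - ?Q (s2 x)) / (s2 x - s1 x)))
      \<longlongrightarrow> a * ?T - a * ?Q \<sigma> + c * ?Q \<sigma> + w * ray_integral \<sigma>) F"
    using integrable_ray_integral C
    by (intro tendsto_intros assms tendsto_tail_integral tail_integral_difference_quotient_tendsto)
  then have "((\<lambda>x. a * ?T - a * ?Q (s1 x) + c * ?Q (s2 x)
        + b x * (s2 x - s1 x) * ((?Q (s1 x) - ?Q (s2 x)) / (s2 x - s1 x)))
      \<longlongrightarrow> a * ?T + (c - a) * ?Q \<sigma> + w * ray_integral \<sigma>) F"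
    by (rule tendsto_eq_rhs) (simp add: algebra_simps)
  moreover have "\<forall>\<^sub>F x in F. a * ?T - a * ?Q (s1 x) + c * ?Q (s2 x)
        + b x * (s2 x - s1 x) * ((?Q (s1 x) - ?Q (s2 x)) / (s2 x - s1 x))
      = (\<integral>z. three_state a (b x) c (s1 x) (s2 x) z * \<phi> z \<partial>lborel)"
    using less
  proof eventually_elim
    case (elim x)
    then show ?case
      unfolding integral_three_state[OF less_imp_le[OF elim]] by (simp add: field_simps)
  qed
  ultimately show ?thesis
    unfolding integral_Heaviside_jump set_integral_ray by (rule Lim_transform_eventually)
qed

end

lemma test_fun_pos_strip_supported:
  assumes "test_fun_pos \<phi>"
  obtains T1 T2 X M where "strip_supported \<phi> T1 T2 X M"
proof -
  define S where "S = closure {z. \<phi> z \<noteq> 0}"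
  have "smooth_fun \<phi>" and "compact S" and pos: "S \<subseteq> {z. 0 < fst z}"
    using assms unfolding test_fun_pos_def S_def by simp_all
  from \<open>smooth_fun \<phi>\<close> have "Ck 0 \<phi>" unfolding smooth_fun_def by (rule spec)
  then have cont: "continuous_on UNIV \<phi>" by simp
  have in_S: "\<phi> z \<noteq> 0 \<Longrightarrow> z \<in> S" for z
    unfolding S_def using closure_subset[of "{z. \<phi> z \<noteq> 0}"] by auto
  show ?thesis
  proof (cases "S = {}")
    case True
    then show ?thesis using cont in_S by (intro that[of 1 0 0 0]) (unfold_locales, auto)
  next
    case False
    obtain T1 where "T1 \<in> fst ` S" and T1: "\<forall>t \<in> fst ` S. T1 \<le> t"
      using compact_attains_inf[OF compact_continuous_image[OF continuous_on_fst[OF continuous_on_id] \<open>compact S\<close>]] False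
      by blast
    obtain B where B: "\<forall>z \<in> S. norm z \<le> B"
      using compact_imp_bounded[OF \<open>compact S\<close>] bounded_iff by auto
    obtain M where M: "\<forall>y \<in> \<phi> ` S. norm y \<le> M"
      using compact_imp_bounded[OF compact_continuous_image[OF continuous_on_subset[OF cont] \<open>compact S\<close>]]
        bounded_iff by blast
    show ?thesis
    proof (intro that[of T1 B B "max 0 M"] strip_supported.intro cont)
      show "0 < T1" using \<open>T1 \<in> fst ` S\<close> pos by auto
      show "T1 \<le> fst z \<and> fst z \<le> B \<and> \<bar>snd z\<bar> \<le> B" if "\<phi> z \<noteq> 0" for z
      proof -
        have "z \<in> S" using in_S[OF that] .
        then show ?thesis
          using T1 B norm_fst_le[of "fst z" "snd z"] norm_snd_le[of "snd z" "fst z"]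
          by (force intro: order_trans)
      qed
      show "\<bar>\<phi> z\<bar> \<le> max 0 M" for z
      proof (cases "\<phi> z = 0")
        case False
        then have "norm (\<phi> z) \<le> M" using M in_S by blast
        then show ?thesis by simp
      qed simp
    qed
  qed
qed

theorem theorem5p1:
  fixes um vm up vp :: real
    and us vs :: "real \<Rightarrow> real \<Rightarrow> real"
    and \<phi> :: "real \<times> real \<Rightarrow> real"
  assumes "vm > 0" and "vp > 0" and "um > up"
    and sol: "\<forall>\<^sub>F e in at (0, 0) within {p :: real \<times> real. 0 < fst p \<and> 0 < snd p}.
               two_shock_state (fst e) (snd e) um vm up vp (us (fst e) (snd e)) (vs (fst e) (snd e))"
    and phi: "test_fun_pos \<phi>"
  shows
    "(((\<lambda>e. integral\<^sup>L lborel (\<lambda>z.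
         three_state um (us (fst e) (snd e)) up
           (shock1_speed (snd e) um vm (us (fst e) (snd e)) (vs (fst e) (snd e)))
           (shock2_speed (snd e) up vp (us (fst e) (snd e)) (vs (fst e) (snd e))) z * \<phi> z))
      \<longlongrightarrow> integral\<^sup>L lborel (\<lambda>z. (um + (up - um) * Heaviside (snd z - (um + up) / 2 * fst z)) * \<phi> z))
      (at (0, 0) within {p :: real \<times> real. 0 < fst p \<and> 0 < snd p})) \<and>
     (((\<lambda>e. integral\<^sup>L lborel (\<lambda>z.
         three_state vm (vs (fst e) (snd e)) vp
           (shock1_speed (snd e) um vm (us (fst e) (snd e)) (vs (fst e) (snd e)))
           (shock2_speed (snd e) up vp (us (fst e) (snd e)) (vs (fst e) (snd e))) z * \<phi> z))
      \<longlongrightarrow> integral\<^sup>L lborel (\<lambda>z. (vm + (vp - vm) * Heaviside (snd z - (um + up) / 2 * fst z)) * \<phi> z)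
          + (LINT t:{0<..}|lborel. (vm + vp) / 2 * (um - up) * t * \<phi> (t, (um + up) / 2 * t)))
      (at (0, 0) within {p :: real \<times> real. 0 < fst p \<and> 0 < snd p}))"
proof -
  let ?F = "at (0::real, 0::real) within {p :: real \<times> real. 0 < fst p \<and> 0 < snd p}"
  obtain T1 T2 X M where "strip_supported \<phi> T1 T2 X M"
    using test_fun_pos_strip_supported[OF phi] .
  then interpret strip_supported \<phi> T1 T2 X M .
  have param: "(fst \<longlongrightarrow> 0) ?F" "(snd \<longlongrightarrow> 0) ?F"
    using tendsto_fst[OF tendsto_ident_at[of "(0::real, 0::real)"]]
      tendsto_snd[OF tendsto_ident_at[of "(0::real, 0::real)"]] by simp_all
  have solution: "\<forall>\<^sub>F e in ?F. 0 < fst e \<and> 0 < snd e \<and>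
      two_shock_state (fst e) (snd e) um vm up vp (us (fst e) (snd e)) (vs (fst e) (snd e))"
  proof -
    have "\<forall>\<^sub>F e in ?F. 0 < fst e \<and> 0 < snd e" by (auto simp: eventually_at_filter)
    with sol show ?thesis by eventually_elim simp
  qed
  note speeds = two_shock_state_speed_limits[OF assms(1-3) param solution]
  note mass = two_shock_state_mass_limit[OF assms(1-3) param solution]
  show ?thesis
    using three_state_tendsto_jump[OF speeds eventually_mono[OF mass(2) less_imp_le]]
      three_state_tendsto_delta[OF speeds(2,3) mass(2,1)]
    by simp
qed

end
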